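(* Let $P=(V;\leq)$ be a poset and let $L=(V;\sqsubseteq)$ be a linear extension of $P$ such that whenever $x<y$ in $P$ there is $z\in V$ with $x\sqsubset z\sqsubset y$ and $z$ incomparable in $P$ to both $x$ and $y$. Then there is a poset $Q$ on the set $V\times\{0,1,2\}$ whose restriction to $V\times\{1\}$ is isomorphic to $P$ and whose restrictions to $V\times\{0\}$ and to $V\times\{2\}$ are isomorphic to $L$ (so $Q$ is a union of a copy of $P$ and two copies of $L$), such that $\bigcup AM_3(Q)=Q$ and $AM_3(Q)$ is isomorphic to $L$.
   Context: A linear extension of $P$ is a linear order on $V$ containing $\leq$. $AM_3(Q)$ is the set of three-element maximal antichains of $Q$, ordered by domination ($X\leq Y$ iff each $x\in X$ is below some $y\in Y$), and $\bigcup AM_3(Q)$ is the union of these antichains. *)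

theory Defs
  imports Main
begin

definition poset_on :: "'a set \<Rightarrow> 'a rel \<Rightarrow> bool" where
  "poset_on V r \<longleftrightarrow> r \<subseteq> V \<times> V \<and> partial_order_on V r"

definition linear_extension :: "'a set \<Rightarrow> 'a rel \<Rightarrow> 'a rel \<Rightarrow> bool" where
  "linear_extension V r l \<longleftrightarrow> l \<subseteq> V \<times> V \<and> linear_order_on V l \<and> r \<subseteq> l"

definition order_iso :: "'a set \<Rightarrow> 'a rel \<Rightarrow> 'b set \<Rightarrow> 'b rel \<Rightarrow> ('a \<Rightarrow> 'b) \<Rightarrow> bool" where
  "order_iso A r B s f \<longleftrightarrow> bij_betw f A B \<and>
     (\<forall>x\<in>A. \<forall>y\<in>A. (x, y) \<in> r \<longleftrightarrow> (f x, f y) \<in> s)"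

definition isomorphic :: "'a set \<Rightarrow> 'a rel \<Rightarrow> 'b set \<Rightarrow> 'b rel \<Rightarrow> bool" where
  "isomorphic A r B s \<longleftrightarrow> (\<exists>f. order_iso A r B s f)"

definition restrict_rel :: "'a rel \<Rightarrow> 'a set \<Rightarrow> 'a rel" where
  "restrict_rel r S = r \<inter> (S \<times> S)"

definition antichain_in :: "'a set \<Rightarrow> 'a rel \<Rightarrow> 'a set \<Rightarrow> bool" where
  "antichain_in A r X \<longleftrightarrow> X \<subseteq> A \<and> (\<forall>x\<in>X. \<forall>y\<in>X. (x, y) \<in> r \<longrightarrow> x = y)"

definition maximal_antichain :: "'a set \<Rightarrow> 'a rel \<Rightarrow> 'a set \<Rightarrow> bool" where
  "maximal_antichain A r X \<longleftrightarrow> antichain_in A r X \<and>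
     (\<forall>Y. antichain_in A r Y \<and> X \<subseteq> Y \<longrightarrow> Y = X)"

definition AM3 :: "'a set \<Rightarrow> 'a rel \<Rightarrow> 'a set set" where
  "AM3 A r = {X. maximal_antichain A r X \<and> card X = 3}"

definition dom_rel :: "'a rel \<Rightarrow> 'a set set \<Rightarrow> 'a set rel" where
  "dom_rel r M = {(X, Y). X \<in> M \<and> Y \<in> M \<and> (\<forall>x\<in>X. \<exists>y\<in>Y. (x, y) \<in> r)}"

end

theory Submission imports Defs begin

text \<open>
  Stack a copy of L (layer 0), a copy of P (layer 1) and a copy of L (layer 2), and let
  (x, i) < (y, j) for i < j exactly when x is strictly below y in L. Of two points of an
  antichain with distinct first coordinates, the L-smaller one then lies on the higher layer,
  unless both lie on layer 1. Hence each column {x} \<times> {0, 1, 2} is a maximal antichain, and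
  columns are ordered by domination exactly as their points are in L. Conversely, a
  three-element maximal antichain X contains (m, 0) and (n, 2), where m and n are the L-largest
  and L-smallest first coordinates in X. If m \<noteq> n, its third point is some (b, 1) with
  n \<sqsubseteq> b \<sqsubseteq> m, and the hypothesis on P yields a d \<noteq> b in the same L-interval that is
  P-incomparable to b; then (d, 1) could be added to X, contradicting maximality.
\<close>

lemma linear_order_on_finite_has_greatest:
  assumes "linear_order_on V L" and "finite T" and "T \<noteq> {}" and "T \<subseteq> V"
  shows "\<exists>m\<in>T. \<forall>s\<in>T. (s, m) \<in> L"
  using assms(2-4)
proof (induction T rule: finite_ne_induct)
  case (singleton x)
  then show ?case
    using assms(1)
    by (auto simp: linear_order_on_def partial_order_on_def preorder_on_def refl_on_def)
next
  case (insert x F)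
  then obtain m where m: "m \<in> F" "\<forall>s\<in>F. (s, m) \<in> L"
    by auto
  have lin: "total_on V L" "trans L" "refl_on V L"
    using assms(1) by (auto simp: linear_order_on_def partial_order_on_def preorder_on_def)
  have "x \<in> V" "m \<in> V"
    using insert m by auto
  then consider "(x, m) \<in> L" | "(m, x) \<in> L"
    using lin(1,3) by (metis refl_onD total_on_def)
  then show ?case
  proof cases
    case 1
    then show ?thesis using m by auto
  next
    case 2
    then show ?thesis
      using m lin(2,3) \<open>x \<in> V\<close> by (auto intro: transD[OF lin(2)] refl_onD)
  qed
qed

lemma linear_order_on_finite_has_least:
  assumes "linear_order_on V L" and "finite T" and "T \<noteq> {}" and "T \<subseteq> V"
  shows "\<exists>n\<in>T. \<forall>s\<in>T. (n, s) \<in> L"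
  using linear_order_on_finite_has_greatest[of V "L\<inverse>" T] assms by simp

lemma maximal_antichain_contains_incomparable:
  assumes "maximal_antichain A r X" and "a \<in> A"
    and "\<And>x. x \<in> X \<Longrightarrow> (a, x) \<in> r \<or> (x, a) \<in> r \<Longrightarrow> x = a"
  shows "a \<in> X"
proof -
  have X: "antichain_in A r X" and max: "\<And>Y. antichain_in A r Y \<Longrightarrow> X \<subseteq> Y \<Longrightarrow> Y = X"
    using assms(1) unfolding maximal_antichain_def by auto
  have "antichain_in A r (insert a X)"
    using X assms(2,3) unfolding antichain_in_def by fastforce
  then show ?thesis
    using max by blast
qed

lemma isomorphic_image:
  assumes "inj_on f A" and "\<And>x y. x \<in> A \<Longrightarrow> y \<in> A \<Longrightarrow> (f x, f y) \<in> s \<longleftrightarrow> (x, y) \<in> r"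
  shows "isomorphic (f ` A) s A r"
  unfolding isomorphic_def order_iso_def
proof (intro exI[of _ "the_inv_into A f"] conjI ballI)
  show "bij_betw (the_inv_into A f) (f ` A) A"
    using assms(1) by (rule bij_betw_the_inv_into[OF inj_on_imp_bij_betw])
  fix X Y assume "X \<in> f ` A" "Y \<in> f ` A"
  then show "(X, Y) \<in> s \<longleftrightarrow> (the_inv_into A f X, the_inv_into A f Y) \<in> r"
    using assms by (auto simp: the_inv_into_f_f)
qed

definition layer_order :: "'a rel \<Rightarrow> 'a rel \<Rightarrow> nat \<Rightarrow> 'a rel" where
  "layer_order P L i = (if i = 1 then P else L)"

definition stacked_order :: "'a rel \<Rightarrow> 'a rel \<Rightarrow> ('a \<times> nat) rel" where
  "stacked_order P L = {((x, i), (y, j)). i \<in> {0, 1, 2} \<and> j \<in> {0, 1, 2} \<and>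
     (i = j \<and> (x, y) \<in> layer_order P L i \<or> i < j \<and> (x, y) \<in> L \<and> x \<noteq> y)}"

lemma in_stacked_order [simp]:
  "((x, i), (y, j)) \<in> stacked_order P L \<longleftrightarrow> i \<in> {0, 1, 2} \<and> j \<in> {0, 1, 2} \<and>
     (i = j \<and> (x, y) \<in> layer_order P L i \<or> i < j \<and> (x, y) \<in> L \<and> x \<noteq> y)"
  by (simp add: stacked_order_def)

definition column :: "'a \<Rightarrow> ('a \<times> nat) set" where
  "column x = {x} \<times> {0, 1, 2}"

lemma inj_column: "inj column"
proof (rule injI)
  fix x y :: 'a
  assume "column x = column y"
  moreover have "(x, 0) \<in> column x"
    by (simp add: column_def)
  ultimately show "x = y"
    by (simp add: column_def)
qed

locale poset_with_linear_extension =
  fixes V :: "'a set" and P L :: "'a rel"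
  assumes poset: "poset_on V P" and extension: "linear_extension V P L"
begin

lemma P_subset: "P \<subseteq> V \<times> V"
  and P_refl: "x \<in> V \<Longrightarrow> (x, x) \<in> P"
  and P_trans: "(x, y) \<in> P \<Longrightarrow> (y, z) \<in> P \<Longrightarrow> (x, z) \<in> P"
  and P_antisym: "(x, y) \<in> P \<Longrightarrow> (y, x) \<in> P \<Longrightarrow> x = y"
  using poset unfolding poset_on_def partial_order_on_def preorder_on_def
  by (auto dest: refl_onD transD antisymD)

lemma L_linear: "linear_order_on V L"
  and L_subset: "L \<subseteq> V \<times> V"
  and P_le_L: "P \<subseteq> L"
  using extension unfolding linear_extension_def by auto

lemma L_refl: "x \<in> V \<Longrightarrow> (x, x) \<in> L"
  and L_trans: "(x, y) \<in> L \<Longrightarrow> (y, z) \<in> L \<Longrightarrow> (x, z) \<in> L"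
  and L_antisym: "(x, y) \<in> L \<Longrightarrow> (y, x) \<in> L \<Longrightarrow> x = y"
  using L_linear unfolding linear_order_on_def partial_order_on_def preorder_on_def
  by (auto dest: refl_onD transD antisymD)

lemma L_total: "x \<in> V \<Longrightarrow> y \<in> V \<Longrightarrow> (x, y) \<in> L \<or> (y, x) \<in> L"
  using L_linear L_refl unfolding linear_order_on_def total_on_def by metis

lemma layer_order_subset_L: "layer_order P L i \<subseteq> L"
  using P_le_L by (simp add: layer_order_def)

lemma layer_order_trans:
  "(x, y) \<in> layer_order P L i \<Longrightarrow> (y, z) \<in> layer_order P L i \<Longrightarrow> (x, z) \<in> layer_order P L i"
  by (cases "i = 1") (simp_all add: layer_order_def P_trans L_trans)

lemma layer_order_antisym: "(x, y) \<in> layer_order P L i \<Longrightarrow> (y, x) \<in> layer_order P L i \<Longrightarrow> x = y"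
  by (cases "i = 1") (simp_all add: layer_order_def P_antisym L_antisym)

lemma poset_on_stacked_order: "poset_on (V \<times> {0, 1, 2}) (stacked_order P L)"
proof -
  have "stacked_order P L \<subseteq> (V \<times> {0, 1, 2}) \<times> (V \<times> {0, 1, 2})"
    using P_subset L_subset by (auto simp: stacked_order_def layer_order_def)
  moreover have "refl_on (V \<times> {0, 1, 2}) (stacked_order P L)"
    by (auto intro!: refl_onI simp: layer_order_def P_refl L_refl)
  moreover have "trans (stacked_order P L)"
  proof (rule transI, clarify)
    fix x i y j z k
    assume "((x, i), (y, j)) \<in> stacked_order P L" "((y, j), (z, k)) \<in> stacked_order P L"
    moreover have "(x, z) \<in> L \<and> x \<noteq> z" if "(x, y) \<in> L" "(y, z) \<in> L" "x \<noteq> y \<or> y \<noteq> z"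
      using that L_trans L_antisym by blast
    ultimately show "((x, i), (z, k)) \<in> stacked_order P L"
      using layer_order_subset_L by (auto intro: layer_order_trans)
  qed
  moreover have "antisym (stacked_order P L)"
  proof (rule antisymI, clarify)
    fix x i y j
    assume "((x, i), (y, j)) \<in> stacked_order P L" "((y, j), (x, i)) \<in> stacked_order P L"
    then show "x = y \<and> i = j"
      by (auto intro: layer_order_antisym)
  qed
  ultimately show ?thesis
    unfolding poset_on_def partial_order_on_def preorder_on_def by blast
qed

lemma order_iso_layer:
  assumes "c \<in> {0, 1, 2}"
  shows "order_iso (V \<times> {c}) (restrict_rel (stacked_order P L) (V \<times> {c})) V (layer_order P L c) fst"
  unfolding order_iso_def restrict_rel_def
proof (intro conjI ballI)
  show "bij_betw fst (V \<times> {c}) V"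
    by (auto simp: bij_betw_def inj_on_def)
qed (use assms in auto)

lemma antichain_layers_decrease_along_L:
  assumes "antichain_in (V \<times> {0, 1, 2}) (stacked_order P L) X"
    and "(y, k) \<in> X" and "(z, k') \<in> X" and "(y, z) \<in> L" and "y \<noteq> z"
  shows "k' < k \<or> k = 1 \<and> k' = 1"
proof (rule ccontr)
  assume "\<not> ?thesis"
  moreover have "k \<in> {0, 1, 2}" "k' \<in> {0, 1, 2}"
    using assms(1-3) unfolding antichain_in_def by auto
  ultimately have "((y, k), (z, k')) \<in> stacked_order P L"
    using assms(4,5) by (auto simp: layer_order_def)
  then show False
    using assms(1-3,5) unfolding antichain_in_def by blast
qed

lemma antichain_column: "x \<in> V \<Longrightarrow> antichain_in (V \<times> {0, 1, 2}) (stacked_order P L) (column x)"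
  unfolding antichain_in_def column_def by auto

lemma antichain_containing_column:
  assumes Y: "antichain_in (V \<times> {0, 1, 2}) (stacked_order P L) Y"
    and "column x \<subseteq> Y" and "x \<in> V"
  shows "Y \<subseteq> column x"
proof clarify
  fix y k
  assume yk: "(y, k) \<in> Y"
  then have "y \<in> V" "k \<in> {0, 1, 2}"
    using Y unfolding antichain_in_def by auto
  have "(x, 0) \<in> Y" "(x, 2) \<in> Y"
    using assms(2) by (auto simp: column_def)
  have "y = x"
  proof (rule ccontr)
    assume "y \<noteq> x"
    from L_total[OF \<open>y \<in> V\<close> \<open>x \<in> V\<close>] consider "(y, x) \<in> L" | "(x, y) \<in> L"
      by blast
    then show False
    proof cases
      case 1
      from antichain_layers_decrease_along_L[OF Y yk \<open>(x, 2) \<in> Y\<close> this \<open>y \<noteq> x\<close>]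
      show False using \<open>k \<in> {0, 1, 2}\<close> by auto
    next
      case 2
      from antichain_layers_decrease_along_L[OF Y \<open>(x, 0) \<in> Y\<close> yk this] \<open>y \<noteq> x\<close>
      show False by auto
    qed
  qed
  then show "(y, k) \<in> column x"
    using \<open>k \<in> {0, 1, 2}\<close> by (simp add: column_def)
qed

lemma column_in_AM3: "x \<in> V \<Longrightarrow> column x \<in> AM3 (V \<times> {0, 1, 2}) (stacked_order P L)"
  using antichain_column antichain_containing_column
  by (auto simp: AM3_def maximal_antichain_def column_def)

lemma column_dom_rel_iff:
  assumes "x \<in> V" and "y \<in> V"
  shows "(column x, column y) \<in> dom_rel (stacked_order P L) (column ` V) \<longleftrightarrow> (x, y) \<in> L"
proof
  assume "(column x, column y) \<in> dom_rel (stacked_order P L) (column ` V)"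
  then have "\<exists>q\<in>column y. ((x, 2), q) \<in> stacked_order P L"
    unfolding dom_rel_def column_def by auto
  then show "(x, y) \<in> L"
    by (auto simp: column_def layer_order_def)
next
  assume xy: "(x, y) \<in> L"
  have "\<forall>p\<in>column x. \<exists>q\<in>column y. (p, q) \<in> stacked_order P L"
  proof (cases "x = y")
    case True
    then show ?thesis
      using assms by (auto simp: column_def layer_order_def P_refl L_refl)
  next
    case False
    then have "((x, 0), (y, 0)) \<in> stacked_order P L" "((x, 1), (y, 2)) \<in> stacked_order P L"
      "((x, 2), (y, 2)) \<in> stacked_order P L"
      using xy by (auto simp: layer_order_def)
    then show ?thesis
      by (auto simp: column_def)
  qed
  then show "(column x, column y) \<in> dom_rel (stacked_order P L) (column ` V)"
    using assms unfolding dom_rel_def by auto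
qed

lemma maximal_antichain_contains_L_greatest_in_layer_0:
  assumes max: "maximal_antichain (V \<times> {0, 1, 2}) (stacked_order P L) X"
    and "(m, k) \<in> X" and greatest: "\<forall>y\<in>fst ` X. (y, m) \<in> L"
  shows "(m, 0) \<in> X"
proof (rule maximal_antichain_contains_incomparable[OF max])
  have X: "antichain_in (V \<times> {0, 1, 2}) (stacked_order P L) X"
    using max unfolding maximal_antichain_def by blast
  then show "(m, 0) \<in> V \<times> {0, 1, 2}"
    using \<open>(m, k) \<in> X\<close> unfolding antichain_in_def by auto
  fix q
  assume "q \<in> X" and comparable: "((m, 0), q) \<in> stacked_order P L \<or> (q, (m, 0)) \<in> stacked_order P L"
  moreover obtain y j where "q = (y, j)"
    by fastforce
  ultimately have q: "q = (y, j)" "(y, j) \<in> X" "(y, m) \<in> L"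
    using greatest by (auto intro: rev_image_eqI)
  show "q = (m, 0)"
  proof (cases "y = m")
    case False
    then have "(y, 0) \<notin> X"
      using antichain_layers_decrease_along_L[OF X _ \<open>(m, k) \<in> X\<close> q(3)] by fastforce
    then show ?thesis
      using comparable q L_antisym by (auto simp: layer_order_def)
  qed (use comparable q in auto)
qed

lemma maximal_antichain_contains_L_least_in_layer_2:
  assumes max: "maximal_antichain (V \<times> {0, 1, 2}) (stacked_order P L) X"
    and "(n, k) \<in> X" and least: "\<forall>y\<in>fst ` X. (n, y) \<in> L"
  shows "(n, 2) \<in> X"
proof (rule maximal_antichain_contains_incomparable[OF max])
  have X: "antichain_in (V \<times> {0, 1, 2}) (stacked_order P L) X"
    using max unfolding maximal_antichain_def by blast
  then show "(n, 2) \<in> V \<times> {0, 1, 2}"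
    using \<open>(n, k) \<in> X\<close> unfolding antichain_in_def by auto
  have "k \<in> {0, 1, 2}"
    using X \<open>(n, k) \<in> X\<close> unfolding antichain_in_def by auto
  fix q
  assume "q \<in> X" and comparable: "((n, 2), q) \<in> stacked_order P L \<or> (q, (n, 2)) \<in> stacked_order P L"
  moreover obtain y j where "q = (y, j)"
    by fastforce
  ultimately have q: "q = (y, j)" "(y, j) \<in> X" "(n, y) \<in> L"
    using least by (auto intro: rev_image_eqI)
  show "q = (n, 2)"
  proof (cases "y = n")
    case False
    then have "(y, 2) \<notin> X"
      using antichain_layers_decrease_along_L[OF X \<open>(n, k) \<in> X\<close> _ q(3)] \<open>k \<in> {0, 1, 2}\<close> by fastforce
    then show ?thesis
      using comparable q L_antisym by (auto simp: layer_order_def)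
  qed (use comparable q in auto)
qed

lemma AM3_contains_L_extremes:
  assumes "X \<in> AM3 (V \<times> {0, 1, 2}) (stacked_order P L)"
  obtains m n where "(m, 0) \<in> X" and "(n, 2) \<in> X"
    and "\<And>y j. (y, j) \<in> X \<Longrightarrow> (n, y) \<in> L \<and> (y, m) \<in> L"
proof -
  have max: "maximal_antichain (V \<times> {0, 1, 2}) (stacked_order P L) X" and "card X = 3"
    using assms unfolding AM3_def by auto
  then have "X \<subseteq> V \<times> {0, 1, 2}" "finite X" "X \<noteq> {}"
    unfolding maximal_antichain_def antichain_in_def by (auto intro: card_ge_0_finite)
  then have "fst ` X \<subseteq> V" "finite (fst ` X)" "fst ` X \<noteq> {}"
    by auto
  then obtain m n where m: "m \<in> fst ` X" "\<forall>y\<in>fst ` X. (y, m) \<in> L"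
    and n: "n \<in> fst ` X" "\<forall>y\<in>fst ` X. (n, y) \<in> L"
    using linear_order_on_finite_has_greatest[OF L_linear]
      linear_order_on_finite_has_least[OF L_linear] by meson
  then have "(m, 0) \<in> X" "(n, 2) \<in> X"
    using maximal_antichain_contains_L_greatest_in_layer_0[OF max]
      maximal_antichain_contains_L_least_in_layer_2[OF max] by auto
  then show ?thesis
  proof (rule that)
    fix y j
    assume "(y, j) \<in> X"
    then have "y \<in> fst ` X"
      by force
    then show "(n, y) \<in> L \<and> (y, m) \<in> L"
      using m(2) n(2) by blast
  qed
qed

end

locale separated_linear_extension = poset_with_linear_extension +
  assumes separating_point: "(x, y) \<in> P \<Longrightarrow> x \<noteq> y \<Longrightarrow>
    \<exists>z\<in>V. (x, z) \<in> L \<and> x \<noteq> z \<and> (z, y) \<in> L \<and> z \<noteq> y \<and>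
      (x, z) \<notin> P \<and> (z, x) \<notin> P \<and> (y, z) \<notin> P \<and> (z, y) \<notin> P"
begin

lemma P_incomparable_in_L_interval:
  assumes "(n, b) \<in> L" and "(b, m) \<in> L" and "n \<noteq> m"
  obtains d where "d \<in> V" "d \<noteq> b" "(b, d) \<notin> P" "(d, b) \<notin> P" "(n, d) \<in> L" "(d, m) \<in> L"
proof (cases "b = m")
  case False
  show ?thesis
  proof (cases "(b, m) \<in> P")
    case True
    then show ?thesis
      using separating_point[OF True False] that assms(1) L_trans by blast
  next
    case False
    moreover have "(m, b) \<notin> P"
      using P_le_L assms(2) L_antisym \<open>b \<noteq> m\<close> by blast
    moreover have "m \<in> V"
      using assms(2) L_subset by auto
    ultimately show ?thesis
      using that[of m] assms(1,2) L_refl L_trans \<open>b \<noteq> m\<close> by metis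
  qed
next
  case True
  then have "n \<noteq> b"
    using assms(3) by simp
  show ?thesis
  proof (cases "(n, b) \<in> P")
    case True
    then show ?thesis
      using separating_point[OF True \<open>n \<noteq> b\<close>] that assms(2) L_trans by blast
  next
    case False
    moreover have "(b, n) \<notin> P"
      using P_le_L assms(1) L_antisym \<open>n \<noteq> b\<close> by blast
    moreover have "n \<in> V"
      using assms(1) L_subset by auto
    ultimately show ?thesis
      using that[of n] assms(1,2) L_refl L_trans \<open>n \<noteq> b\<close> by metis
  qed
qed

lemma three_point_antichain_not_maximal:
  assumes "(n, b) \<in> L" and "(b, m) \<in> L" and "n \<noteq> m"
  shows "\<not> maximal_antichain (V \<times> {0, 1, 2}) (stacked_order P L) {(m, 0), (n, 2), (b, 1)}"
proof
  assume max: "maximal_antichain (V \<times> {0, 1, 2}) (stacked_order P L) {(m, 0), (n, 2), (b, 1)}"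
  obtain d where d: "d \<in> V" "d \<noteq> b" "(b, d) \<notin> P" "(d, b) \<notin> P" "(n, d) \<in> L" "(d, m) \<in> L"
    using P_incomparable_in_L_interval[OF assms] by blast
  have "(d, 1 :: nat) \<in> {(m, 0), (n, 2), (b, 1)}"
  proof (rule maximal_antichain_contains_incomparable[OF max])
    show "(d, 1) \<in> V \<times> {0, 1, 2}"
      using d by simp
    fix q
    assume "q \<in> {(m, 0), (n, 2), (b, 1)}"
      and "((d, 1), q) \<in> stacked_order P L \<or> (q, (d, 1)) \<in> stacked_order P L"
    then show "q = (d, 1)"
      using d L_antisym by (auto simp: layer_order_def)
  qed
  then show False
    using d(2) by simp
qed

lemma AM3_stacked_order_column:
  assumes X: "X \<in> AM3 (V \<times> {0, 1, 2}) (stacked_order P L)"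
  shows "\<exists>x\<in>V. X = column x"
proof -
  have max: "maximal_antichain (V \<times> {0, 1, 2}) (stacked_order P L) X" and "card X = 3"
    using X unfolding AM3_def by auto
  then have antichain: "antichain_in (V \<times> {0, 1, 2}) (stacked_order P L) X"
    and XW: "X \<subseteq> V \<times> {0, 1, 2}" and "finite X"
    unfolding maximal_antichain_def antichain_in_def by (auto intro: card_ge_0_finite)
  obtain m n where m0: "(m, 0) \<in> X" and n2: "(n, 2) \<in> X"
    and between: "\<And>y j. (y, j) \<in> X \<Longrightarrow> (n, y) \<in> L \<and> (y, m) \<in> L"
    using AM3_contains_L_extremes[OF X] by blast
  have "m \<in> V"
    using m0 XW by auto
  show ?thesis
  proof (cases "n = m")
    case True
    then have "X \<subseteq> column m"
      using between XW L_antisym by (fastforce simp: column_def)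
    then show ?thesis
      using max antichain_column[OF \<open>m \<in> V\<close>] \<open>m \<in> V\<close> unfolding maximal_antichain_def by blast
  next
    case False
    have "\<not> X \<subseteq> {(m, 0), (n, 2)}"
      using card_mono[of "{(m, 0), (n, 2)}" X] \<open>card X = 3\<close> by (auto simp: card_insert_if)
    then obtain b k where bk: "(b, k) \<in> X" "(b, k) \<notin> {(m, 0), (n, 2)}"
      by auto
    have "k = 1"
    proof (rule ccontr)
      assume "k \<noteq> 1"
      with bk XW have "k = 0 \<and> b \<noteq> m \<or> k = 2 \<and> b \<noteq> n"
        by auto
      then show False
        using antichain_layers_decrease_along_L[OF antichain bk(1) m0]
          antichain_layers_decrease_along_L[OF antichain n2 bk(1)] between[OF bk(1)] by auto
    qed
    have "X = {(m, 0), (n, 2), (b, 1)}"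
      using card_subset_eq[OF \<open>finite X\<close>, of "{(m, 0), (n, 2), (b, 1)}"] \<open>card X = 3\<close>
        m0 n2 bk \<open>k = 1\<close> by auto
    then show ?thesis
      using max three_point_antichain_not_maximal between[OF bk(1)] False by auto
  qed
qed

lemma AM3_stacked_order: "AM3 (V \<times> {0, 1, 2}) (stacked_order P L) = column ` V"
  using AM3_stacked_order_column column_in_AM3 by blast

end

theorem lemma6p6:
  fixes V :: "'a set" and P L :: "'a rel"
  assumes "poset_on V P"
    and "linear_extension V P L"
    and "\<forall>x\<in>V. \<forall>y\<in>V. (x, y) \<in> P \<and> x \<noteq> y \<longrightarrow>
           (\<exists>z\<in>V. (x, z) \<in> L \<and> x \<noteq> z \<and> (z, y) \<in> L \<and> z \<noteq> y \<and>
                  (x, z) \<notin> P \<and> (z, x) \<notin> P \<and> (y, z) \<notin> P \<and> (z, y) \<notin> P)"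
  shows "\<exists>Q :: ('a \<times> nat) rel.
           poset_on (V \<times> {0, 1, 2}) Q \<and>
           isomorphic (V \<times> {1}) (restrict_rel Q (V \<times> {1})) V P \<and>
           isomorphic (V \<times> {0}) (restrict_rel Q (V \<times> {0})) V L \<and>
           isomorphic (V \<times> {2}) (restrict_rel Q (V \<times> {2})) V L \<and>
           \<Union>(AM3 (V \<times> {0, 1, 2}) Q) = V \<times> {0, 1, 2} \<and>
           isomorphic (AM3 (V \<times> {0, 1, 2}) Q) (dom_rel Q (AM3 (V \<times> {0, 1, 2}) Q)) V L"
proof -
  interpret poset_with_linear_extension V P L
    using assms(1,2) by unfold_locales
  interpret separated_linear_extension V P L
    using assms(3) P_subset by unfold_locales blast
  have layer: "isomorphic (V \<times> {c}) (restrict_rel (stacked_order P L) (V \<times> {c}))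
      V (layer_order P L c)" if "c \<in> {0, 1, 2}" for c
    using order_iso_layer[OF that] unfolding isomorphic_def by blast
  show ?thesis
  proof (intro exI[of _ "stacked_order P L"] conjI)
    show "poset_on (V \<times> {0, 1, 2}) (stacked_order P L)"
      by (rule poset_on_stacked_order)
    show "isomorphic (V \<times> {1}) (restrict_rel (stacked_order P L) (V \<times> {1})) V P"
      "isomorphic (V \<times> {0}) (restrict_rel (stacked_order P L) (V \<times> {0})) V L"
      "isomorphic (V \<times> {2}) (restrict_rel (stacked_order P L) (V \<times> {2})) V L"
      using layer[of 1] layer[of 0] layer[of 2] by (simp_all add: layer_order_def)
    show "\<Union>(AM3 (V \<times> {0, 1, 2}) (stacked_order P L)) = V \<times> {0, 1, 2}"
      unfolding AM3_stacked_order by (auto simp: column_def)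
    show "isomorphic (AM3 (V \<times> {0, 1, 2}) (stacked_order P L))
        (dom_rel (stacked_order P L) (AM3 (V \<times> {0, 1, 2}) (stacked_order P L))) V L"
      unfolding AM3_stacked_order
      using isomorphic_image[OF inj_on_subset[OF inj_column] column_dom_rel_iff] by blast
  qed
qed

end
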